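(* Let $\ket\psi$ be a pure $n$-qubit state, $t\ge1$, $\bm s\in\{0,1\}^n$. Consider the $t$-copy swap test for $\bm s$: a single ancilla qubit initialized to $\ket0$ and a state register $(\ket\psi\ket\psi)^{\otimes t}$; apply a Hadamard to the ancilla, then the controlled unitary $\ket0\bra0\otimes I+\ket1\bra1\otimes\mathrm{SWAP}_{\bm s}^{\otimes t}$, then a Hadamard to the ancilla, and measure the ancilla, obtaining a bit $x$. Then $x$ is a Bernoulli random variable with $\Pr(x=1)=\frac12(1-P(\bm s)^t)$, and $x$ has the same distribution as $\bm x\cdot\bm s$ with $\bm x\sim p_t$. Consequently, for each $m\ge1$, the estimator $1-\frac2m\sum_{k=1}^m x_k$ built from $m$ i.i.d. swap-test outcomes has the same distribution as $\widehat{P^t}(\bm s)=1-\frac2m\sum_{k=1}^m \bm x_k\cdot\bm s$ built from $m$ i.i.d. samples $\bm x_k\sim p_t$.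
   Context: Subsystems are bitstrings $\bm s\in\{0,1\}^n$ (qubit $j$ included iff $s_j=1$); $\bm x\cdot\bm s\in\{0,1\}$ is the dot product mod 2. $\rho_{\bm s}=\mathrm{Tr}_{\bar{\bm s}}\ket\psi\bra\psi$ and $P(\bm s)=\mathrm{Tr}(\rho_{\bm s}^2)$ (with $P(\bm 0)=1$). $\mathrm{SWAP}_{\bm s}$ swaps the qubits of subsystem $\bm s$ between two copies of the $n$-qubit space. The $t$-copy hidden cut circuit: an $n$-qubit group register is initialized to $\ket{0^n}$ and a state register to $(\ket\psi\ket\psi)^{\otimes t}$; apply $H^{\otimes n}$ to the group register; apply $\sum_{\bm s}\ket{\bm s}\bra{\bm s}\otimes \mathrm{SWAP}_{\bm s}^{\otimes t}$; apply $H^{\otimes n}$ to the group register; measure the group register in the computational basis; $p_t$ denotes the resulting distribution. *)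

theory Defs
  imports "HOL-Analysis.Analysis" "HOL-Probability.Probability"
begin

(* Computational basis states of k qubits: boolean lists of length k
   (True = |1>).  A subsystem s of n qubits is also a bool list of length n,
   qubit j included iff s!j. *)
definition qubits :: "nat \<Rightarrow> bool list set" where
  "qubits k = {x. length x = k}"

definition dotb :: "bool list \<Rightarrow> bool list \<Rightarrow> bool" where
  "dotb x s = odd (card {j. j < length x \<and> j < length s \<and> x ! j \<and> s ! j})"

definition sgn_bit :: "bool \<Rightarrow> complex" where
  "sgn_bit b = (if b then -1 else 1)"

definition mix :: "bool list \<Rightarrow> bool list \<Rightarrow> bool list \<Rightarrow> bool list" where
  "mix s u v = map (\<lambda>(c, x, y). if c then x else y) (zip s (zip u v))"

(* representatives of basis states of subsystem s: qubits outside s set to 0 *)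
definition sub_basis :: "bool list \<Rightarrow> bool list set" where
  "sub_basis s = {a \<in> qubits (length s). \<forall>j < length s. \<not> s ! j \<longrightarrow> \<not> a ! j}"

(* reduced density matrix rho_s = Tr_{complement of s} |psi><psi| *)
definition rho :: "(bool list \<Rightarrow> complex) \<Rightarrow> bool list \<Rightarrow> bool list \<Rightarrow> bool list \<Rightarrow> complex" where
  "rho psi s a a' = (\<Sum>b \<in> sub_basis (map Not s). psi (mix s a b) * cnj (psi (mix s a' b)))"

(* purity P(s) = Tr(rho_s^2) (a real number; we take the real part of the trace) *)
definition purity :: "(bool list \<Rightarrow> complex) \<Rightarrow> bool list \<Rightarrow> real" where
  "purity psi s = Re (\<Sum>a \<in> sub_basis s. \<Sum>a' \<in> sub_basis s. rho psi s a a' * rho psi s a' a)"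

(* State register (|psi>|psi>)^{\<otimes> t}: basis states are lists of t pairs of n-qubit basis states *)
definition regs :: "nat \<Rightarrow> nat \<Rightarrow> (bool list \<times> bool list) list set" where
  "regs n t = {r. length r = t \<and> (\<forall>(a, b) \<in> set r. length a = n \<and> length b = n)}"

definition psi_reg :: "(bool list \<Rightarrow> complex) \<Rightarrow> (bool list \<times> bool list) list \<Rightarrow> complex" where
  "psi_reg psi r = prod_list (map (\<lambda>(a, b). psi a * psi b) r)"

definition swap_pair :: "bool list \<Rightarrow> bool list \<times> bool list \<Rightarrow> bool list \<times> bool list" where
  "swap_pair s ab = (mix s (snd ab) (fst ab), mix s (fst ab) (snd ab))"

definition swap_t :: "bool list \<Rightarrow> (bool list \<times> bool list) list \<Rightarrow> (bool list \<times> bool list) list" where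
  "swap_t s r = map (swap_pair s) r"

(* Action of SWAP_s^{\<otimes> t} (a basis permutation sigma, an involution) on an
   amplitude vector: (U phi)(r) = phi(sigma^{-1} r) = phi(sigma r). *)

(* joint states: amplitude functions on (ancilla bit, register basis state) *)
definition had_anc :: "(bool \<times> 'r \<Rightarrow> complex) \<Rightarrow> (bool \<times> 'r \<Rightarrow> complex)" where
  "had_anc phi = (\<lambda>(b, r). (phi (False, r) + sgn_bit b * phi (True, r)) / complex_of_real (sqrt 2))"

definition ctrl_swap :: "bool list \<Rightarrow> (bool \<times> (bool list \<times> bool list) list \<Rightarrow> complex)
    \<Rightarrow> (bool \<times> (bool list \<times> bool list) list \<Rightarrow> complex)" where
  "ctrl_swap s phi = (\<lambda>(b, r). if b then phi (True, swap_t s r) else phi (False, r))"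

definition swap_test_init :: "(bool list \<Rightarrow> complex) \<Rightarrow> bool \<times> (bool list \<times> bool list) list \<Rightarrow> complex" where
  "swap_test_init psi = (\<lambda>(b, r). if b then 0 else psi_reg psi r)"

definition swap_test_final :: "(bool list \<Rightarrow> complex) \<Rightarrow> bool list \<Rightarrow> bool \<times> (bool list \<times> bool list) list \<Rightarrow> complex" where
  "swap_test_final psi s = had_anc (ctrl_swap s (had_anc (swap_test_init psi)))"

definition swap_test_prob :: "nat \<Rightarrow> nat \<Rightarrow> (bool list \<Rightarrow> complex) \<Rightarrow> bool list \<Rightarrow> bool \<Rightarrow> real" where
  "swap_test_prob n t psi s x = (\<Sum>r \<in> regs n t. (cmod (swap_test_final psi s (x, r)))\<^sup>2)"

definition had_grp :: "nat \<Rightarrow> (bool list \<times> 'r \<Rightarrow> complex) \<Rightarrow> (bool list \<times> 'r \<Rightarrow> complex)" where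
  "had_grp n phi = (\<lambda>(g, r). (\<Sum>y \<in> qubits n. sgn_bit (dotb g y) * phi (y, r))
      / complex_of_real (sqrt (2 ^ n)))"

definition ctrl_swap_grp :: "(bool list \<times> (bool list \<times> bool list) list \<Rightarrow> complex)
    \<Rightarrow> (bool list \<times> (bool list \<times> bool list) list \<Rightarrow> complex)" where
  "ctrl_swap_grp phi = (\<lambda>(g, r). phi (g, swap_t g r))"

definition hidden_cut_init :: "nat \<Rightarrow> (bool list \<Rightarrow> complex) \<Rightarrow> bool list \<times> (bool list \<times> bool list) list \<Rightarrow> complex" where
  "hidden_cut_init n psi = (\<lambda>(g, r). if g = replicate n False then psi_reg psi r else 0)"

definition hidden_cut_final :: "nat \<Rightarrow> (bool list \<Rightarrow> complex) \<Rightarrow> bool list \<times> (bool list \<times> bool list) list \<Rightarrow> complex" where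
  "hidden_cut_final n psi = had_grp n (ctrl_swap_grp (had_grp n (hidden_cut_init n psi)))"

definition p_t :: "nat \<Rightarrow> nat \<Rightarrow> (bool list \<Rightarrow> complex) \<Rightarrow> bool list \<Rightarrow> real" where
  "p_t n t psi x = (if x \<in> qubits n then (\<Sum>r \<in> regs n t. (cmod (hidden_cut_final n psi (x, r)))\<^sup>2) else 0)"

definition swap_test_pmf :: "nat \<Rightarrow> nat \<Rightarrow> (bool list \<Rightarrow> complex) \<Rightarrow> bool list \<Rightarrow> bool pmf" where
  "swap_test_pmf n t psi s = embed_pmf (swap_test_prob n t psi s)"

definition p_t_pmf :: "nat \<Rightarrow> nat \<Rightarrow> (bool list \<Rightarrow> complex) \<Rightarrow> bool list pmf" where
  "p_t_pmf n t psi = embed_pmf (p_t n t psi)"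

end

theory Submission
  imports Defs
begin

(* Both circuits only apply the basis permutations SWAP_z, so every output probability is a
   combination of the overlaps Y(z) = <psi psi| SWAP_z |psi psi>.  Because
   SWAP_y SWAP_y' = SWAP_(y xor y'), the overlap of SWAP_y^(t) and SWAP_y'^(t) on the t-copy
   register is Y(y xor y')^t; moreover Y(0) = 1 and Y(s) = Tr rho_s^2 = P(s) (swap trick).
   The swap test therefore outputs 1 with probability (1 - P(s)^t)/2, while the hidden cut
   circuit gives p_t(x) = 2^-n sum_z (-1)^(x.z) Y(z)^t.  Summing p_t over the coset x.s = b,
   character orthogonality keeps only the terms z = 0 and z = s, which yields the same
   Bernoulli law for x.s.  Equal single-sample laws give equal laws of any statistic of
   i.i.d. samples, in particular of the estimator. *)

lemma qubits_Suc: "qubits (Suc n) = (\<lambda>(d, x). d # x) ` (UNIV \<times> qubits n)"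
  by (auto simp: qubits_def image_iff length_Suc_conv)

lemma finite_qubits [simp]: "finite (qubits n)"
  using finite_lists_length_eq[of "UNIV :: bool set" n] by (simp add: qubits_def)

lemma card_qubits: "card (qubits n) = 2 ^ n"
  using card_lists_length_eq[of "UNIV :: bool set" n] by (simp add: qubits_def)

lemma replicate_False_in_qubits [simp]: "replicate n False \<in> qubits n"
  by (simp add: qubits_def)

lemma sum_qubits_Suc: "(\<Sum>x\<in>qubits (Suc n). f x) = (\<Sum>d\<in>UNIV. \<Sum>x\<in>qubits n. f (d # x))"
proof -
  have "inj_on (\<lambda>(d, x). d # x) (UNIV \<times> qubits n)"
    by (auto simp: inj_on_def)
  then show ?thesis
    by (simp add: qubits_Suc sum.reindex sum.cartesian_product case_prod_unfold)
qed

lemma dotb_Nil [simp]: "dotb [] z = False"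
  by (simp add: dotb_def)

lemma dotb_Cons [simp]: "dotb (d # x) (c # z) = ((d \<and> c) \<noteq> dotb x z)"
proof -
  let ?S = "{j. j < length x \<and> j < length z \<and> x ! j \<and> z ! j}"
  have "{j. j < length (d # x) \<and> j < length (c # z) \<and> (d # x) ! j \<and> (c # z) ! j}
      = (if d \<and> c then {0} else {}) \<union> Suc ` ?S"
    by (auto simp: image_iff nth_Cons split: nat.splits) (metis Suc_pred gr0I)+
  moreover have "card ((if d \<and> c then {0} else {}) \<union> Suc ` ?S) = of_bool (d \<and> c) + card ?S"
    by (auto simp: card_image)
  ultimately show ?thesis
    unfolding dotb_def by auto
qed

lemma dotb_replicate_False [simp]: "dotb x (replicate n False) = False"
proof -
  have "{j. j < length x \<and> j < length (replicate n False) \<and> x ! j \<and> replicate n False ! j} = {}"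
    by auto
  then show ?thesis
    unfolding dotb_def by (simp only:) simp
qed

definition bxor :: "bool list \<Rightarrow> bool list \<Rightarrow> bool list" where
  "bxor y z = map2 (\<noteq>) y z"

lemma length_bxor [simp]: "length (bxor y z) = min (length y) (length z)"
  by (simp add: bxor_def)

lemma nth_bxor [simp]: "j < length y \<Longrightarrow> j < length z \<Longrightarrow> bxor y z ! j = (y ! j \<noteq> z ! j)"
  by (simp add: bxor_def)

lemma bxor_Cons [simp]: "bxor (a # y) (b # z) = (a \<noteq> b) # bxor y z"
  by (simp add: bxor_def)

lemma bxor_in_qubits [simp]: "y \<in> qubits n \<Longrightarrow> z \<in> qubits n \<Longrightarrow> bxor y z \<in> qubits n"
  by (simp add: qubits_def)

lemma bxor_bxor_cancel: "y \<in> qubits n \<Longrightarrow> z \<in> qubits n \<Longrightarrow> bxor y (bxor y z) = z"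
  by (auto simp: qubits_def intro!: nth_equalityI)

lemma bxor_self [simp]: "y \<in> qubits n \<Longrightarrow> bxor y y = replicate n False"
  by (auto simp: qubits_def intro!: nth_equalityI)

lemma bxor_replicate_False_left [simp]: "z \<in> qubits n \<Longrightarrow> bxor (replicate n False) z = z"
  by (auto simp: qubits_def intro!: nth_equalityI)

lemma bxor_replicate_False_right [simp]: "z \<in> qubits n \<Longrightarrow> bxor z (replicate n False) = z"
  by (auto simp: qubits_def intro!: nth_equalityI)

lemma bxor_eq_replicate_False_iff:
  "y \<in> qubits n \<Longrightarrow> z \<in> qubits n \<Longrightarrow> bxor y z = replicate n False \<longleftrightarrow> y = z"
  by (auto simp: qubits_def list_eq_iff_nth_eq)

lemma dotb_bxor:
  "x \<in> qubits n \<Longrightarrow> y \<in> qubits n \<Longrightarrow> z \<in> qubits n \<Longrightarrow> dotb x (bxor y z) = (dotb x y \<noteq> dotb x z)"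
proof (induction n arbitrary: x y z)
  case 0
  then show ?case by (simp add: qubits_def)
next
  case (Suc n)
  then obtain d x' c y' e z' where "x = d # x'" "y = c # y'" "z = e # z'"
    and "x' \<in> qubits n" "y' \<in> qubits n" "z' \<in> qubits n"
    by (auto simp: qubits_Suc)
  with Suc.IH[of x' y' z'] show ?case by auto
qed

lemma sum_qubits_bxor_reindex:
  "y \<in> qubits n \<Longrightarrow> (\<Sum>z\<in>qubits n. f (bxor y z)) = (\<Sum>z\<in>qubits n. f z)"
  by (rule sum.reindex_bij_witness[of _ "bxor y" "bxor y"]) (auto simp: bxor_bxor_cancel)

lemma sgn_bit_neq: "sgn_bit (a \<noteq> b) = sgn_bit a * sgn_bit b"
  by (simp add: sgn_bit_def)

lemma cnj_sgn_bit [simp]: "cnj (sgn_bit a) = sgn_bit a"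
  by (simp add: sgn_bit_def)

lemma sum_sgn_bit_dotb:
  "w \<in> qubits n \<Longrightarrow> (\<Sum>x\<in>qubits n. sgn_bit (dotb x w)) = (if w = replicate n False then 2 ^ n else 0)"
proof (induction n arbitrary: w)
  case 0
  then show ?case by (simp add: qubits_def sgn_bit_def)
next
  case (Suc n)
  then obtain c w' where w: "w = c # w'" "w' \<in> qubits n"
    by (auto simp: qubits_Suc)
  have "(\<Sum>x\<in>qubits (Suc n). sgn_bit (dotb x w))
      = (\<Sum>d\<in>UNIV. sgn_bit (d \<and> c)) * (\<Sum>x\<in>qubits n. sgn_bit (dotb x w'))"
    by (simp only: sum_qubits_Suc w dotb_Cons sgn_bit_neq sum_product)
  also have "(\<Sum>d\<in>UNIV. sgn_bit (d \<and> c)) = (if c then 0 else 2)"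
    by (simp add: UNIV_bool sgn_bit_def)
  finally show ?case
    by (simp add: w Suc.IH[OF w(2)])
qed

lemma sum_sgn_bit_dotb_coset:
  assumes s: "s \<in> qubits n" and z: "z \<in> qubits n"
  shows "(\<Sum>x\<in>{x\<in>qubits n. dotb x s = b}. sgn_bit (dotb x z))
    = 2 ^ n * (of_bool (z = replicate n False) + sgn_bit b * of_bool (z = s)) / 2"
proof -
  have "(\<Sum>x\<in>{x\<in>qubits n. dotb x s = b}. sgn_bit (dotb x z))
      = (\<Sum>x\<in>qubits n. (1 + sgn_bit b * sgn_bit (dotb x s)) / 2 * sgn_bit (dotb x z))"
    by (simp add: sum.inter_filter) (rule sum.cong; cases b; simp add: sgn_bit_def)
  also have "\<dots> = ((\<Sum>x\<in>qubits n. sgn_bit (dotb x z))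
      + sgn_bit b * (\<Sum>x\<in>qubits n. sgn_bit (dotb x s) * sgn_bit (dotb x z))) / 2"
    by (simp add: sum.distrib sum_distrib_left sum_divide_distrib[symmetric] algebra_simps)
  also have "(\<Sum>x\<in>qubits n. sgn_bit (dotb x s) * sgn_bit (dotb x z))
      = (\<Sum>x\<in>qubits n. sgn_bit (dotb x (bxor s z)))"
    by (rule sum.cong) (simp_all add: dotb_bxor s z sgn_bit_def)
  also have "(\<Sum>x\<in>qubits n. sgn_bit (dotb x (bxor s z))) = 2 ^ n * of_bool (z = s)"
    using sum_sgn_bit_dotb[OF bxor_in_qubits[OF s z]] bxor_eq_replicate_False_iff[OF s z] by auto
  also have "(\<Sum>x\<in>qubits n. sgn_bit (dotb x z)) = 2 ^ n * of_bool (z = replicate n False)"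
    using sum_sgn_bit_dotb[OF z] by simp
  finally show ?thesis
    by (simp add: algebra_simps)
qed

lemma length_mix [simp]: "length (mix s u v) = min (length s) (min (length u) (length v))"
  by (simp add: mix_def)

lemma nth_mix [simp]:
  "j < length s \<Longrightarrow> j < length u \<Longrightarrow> j < length v \<Longrightarrow> mix s u v ! j = (if s ! j then u ! j else v ! j)"
  by (simp add: mix_def)

lemma swap_pair_in_qubits:
  "z \<in> qubits n \<Longrightarrow> p \<in> qubits n \<times> qubits n \<Longrightarrow> swap_pair z p \<in> qubits n \<times> qubits n"
  by (auto simp: swap_pair_def qubits_def)

lemma swap_pair_swap_pair:
  "z \<in> qubits n \<Longrightarrow> p \<in> qubits n \<times> qubits n \<Longrightarrow> swap_pair z (swap_pair z p) = p"
  by (cases p) (auto simp: swap_pair_def qubits_def split: if_splits intro!: nth_equalityI)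

lemma swap_pair_comp:
  "y \<in> qubits n \<Longrightarrow> y' \<in> qubits n \<Longrightarrow> p \<in> qubits n \<times> qubits n \<Longrightarrow>
    swap_pair y' (swap_pair y p) = swap_pair (bxor y y') p"
  by (cases p) (auto simp: swap_pair_def qubits_def intro!: nth_equalityI)

lemma swap_pair_replicate_False:
  "p \<in> qubits n \<times> qubits n \<Longrightarrow> swap_pair (replicate n False) p = p"
  by (cases p) (auto simp: swap_pair_def qubits_def intro!: nth_equalityI)

lemma swap_t_replicate_False: "r \<in> regs n t \<Longrightarrow> swap_t (replicate n False) r = r"
  unfolding swap_t_def regs_def
  by (rule map_idI) (use swap_pair_replicate_False[of _ n] in \<open>auto simp: qubits_def\<close>)

lemma sum_swap_pair_reindex:
  "z \<in> qubits n \<Longrightarrow>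
    (\<Sum>p\<in>qubits n \<times> qubits n. f (swap_pair z p)) = (\<Sum>p\<in>qubits n \<times> qubits n. f p)"
  by (rule sum.reindex_bij_witness[of _ "swap_pair z" "swap_pair z"])
     (auto simp: swap_pair_swap_pair swap_pair_in_qubits)

lemma regs_Suc: "regs n (Suc t) = (\<lambda>(p, r). p # r) ` ((qubits n \<times> qubits n) \<times> regs n t)"
  by (fastforce simp: regs_def qubits_def image_iff length_Suc_conv)

lemma sum_regs_prod_list:
  fixes h :: "bool list \<times> bool list \<Rightarrow> 'a::comm_semiring_1"
  shows "(\<Sum>r\<in>regs n t. prod_list (map h r)) = (\<Sum>p\<in>qubits n \<times> qubits n. h p) ^ t"
proof (induction t)
  case 0
  have "regs n 0 = {[]}"
    by (auto simp: regs_def)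
  then show ?case by simp
next
  case (Suc t)
  have "inj_on (\<lambda>(p, r). p # r) ((qubits n \<times> qubits n) \<times> regs n t)"
    by (auto simp: inj_on_def)
  then have "(\<Sum>r\<in>regs n (Suc t). prod_list (map h r))
      = (\<Sum>p\<in>qubits n \<times> qubits n. h p) * (\<Sum>r\<in>regs n t. prod_list (map h r))"
    by (simp add: regs_Suc sum.reindex case_prod_unfold sum_product sum.cartesian_product)
  with Suc.IH show ?case by simp
qed

definition psi_pair :: "(bool list \<Rightarrow> complex) \<Rightarrow> bool list \<times> bool list \<Rightarrow> complex" where
  "psi_pair psi = (\<lambda>(a, b). psi a * psi b)"

definition swap_overlap :: "nat \<Rightarrow> (bool list \<Rightarrow> complex) \<Rightarrow> bool list \<Rightarrow> complex" where
  "swap_overlap n psi z =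
    (\<Sum>p\<in>qubits n \<times> qubits n. psi_pair psi p * cnj (psi_pair psi (swap_pair z p)))"

lemma sum_regs_swap_t_overlap:
  assumes "y \<in> qubits n" "y' \<in> qubits n"
  shows "(\<Sum>r\<in>regs n t. psi_reg psi (swap_t y r) * cnj (psi_reg psi (swap_t y' r)))
    = swap_overlap n psi (bxor y y') ^ t"
proof -
  have prod_list_mult_cnj:
    "prod_list (map f r) * cnj (prod_list (map g r)) = prod_list (map (\<lambda>p. f p * cnj (g p)) r)"
    for f g :: "bool list \<times> bool list \<Rightarrow> complex" and r
    by (induction r) (auto simp: algebra_simps)
  have "(\<Sum>r\<in>regs n t. psi_reg psi (swap_t y r) * cnj (psi_reg psi (swap_t y' r)))
      = (\<Sum>p\<in>qubits n \<times> qubits n. psi_pair psi (swap_pair y p) * cnj (psi_pair psi (swap_pair y' p))) ^ t"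
    by (simp add: psi_reg_def swap_t_def psi_pair_def o_def prod_list_mult_cnj sum_regs_prod_list)
  also have "(\<Sum>p\<in>qubits n \<times> qubits n. psi_pair psi (swap_pair y p) * cnj (psi_pair psi (swap_pair y' p)))
      = (\<Sum>p\<in>qubits n \<times> qubits n. psi_pair psi (swap_pair y p)
          * cnj (psi_pair psi (swap_pair y' (swap_pair y (swap_pair y p)))))"
    by (rule sum.cong) (use assms swap_pair_swap_pair in auto)
  also have "\<dots> = (\<Sum>p\<in>qubits n \<times> qubits n. psi_pair psi p * cnj (psi_pair psi (swap_pair y' (swap_pair y p))))"
    by (rule sum_swap_pair_reindex[OF assms(1)])
  also have "\<dots> = swap_overlap n psi (bxor y y')"
    unfolding swap_overlap_def by (rule sum.cong) (use assms swap_pair_comp in auto)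
  finally show ?thesis .
qed

lemma swap_overlap_replicate_False:
  assumes norm: "(\<Sum>x\<in>qubits n. (cmod (psi x))\<^sup>2) = 1"
  shows "swap_overlap n psi (replicate n False) = 1"
proof -
  have "swap_overlap n psi (replicate n False) = (\<Sum>p\<in>qubits n \<times> qubits n. psi_pair psi p * cnj (psi_pair psi p))"
    unfolding swap_overlap_def by (rule sum.cong) (auto simp: swap_pair_replicate_False)
  also have "\<dots> = (\<Sum>a\<in>qubits n. \<Sum>b\<in>qubits n. of_real ((cmod (psi a))\<^sup>2 * (cmod (psi b))\<^sup>2))"
  proof -
    have "psi a * psi b * cnj (psi a * psi b) = of_real ((cmod (psi a))\<^sup>2 * (cmod (psi b))\<^sup>2)" for a b
      unfolding of_real_mult complex_norm_square by (simp add: algebra_simps)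
    then show ?thesis
      by (simp add: sum.cartesian_product psi_pair_def case_prod_unfold)
  qed
  also have "\<dots> = of_real ((\<Sum>a\<in>qubits n. (cmod (psi a))\<^sup>2) * (\<Sum>b\<in>qubits n. (cmod (psi b))\<^sup>2))"
    by (simp add: sum_product)
  finally show ?thesis
    using norm by simp
qed

lemma swap_overlap_real:
  assumes "z \<in> qubits n"
  shows "swap_overlap n psi z = of_real (Re (swap_overlap n psi z))"
proof -
  have "cnj (swap_overlap n psi z) = (\<Sum>p\<in>qubits n \<times> qubits n. cnj (psi_pair psi p) * psi_pair psi (swap_pair z p))"
    by (simp add: swap_overlap_def)
  also have "\<dots> = (\<Sum>p\<in>qubits n \<times> qubits n.
      cnj (psi_pair psi (swap_pair z p)) * psi_pair psi (swap_pair z (swap_pair z p)))"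
    by (rule sum_swap_pair_reindex[OF assms, symmetric])
  also have "\<dots> = swap_overlap n psi z"
    unfolding swap_overlap_def by (rule sum.cong) (use assms swap_pair_swap_pair in \<open>auto simp: mult.commute\<close>)
  finally have "Im (swap_overlap n psi z) = 0"
    by (metis cnj.sel(2) neg_equal_zero)
  then show ?thesis
    by (simp add: complex_eq_iff)
qed

lemma sum_qubits_split_subsystem:
  assumes "s \<in> qubits n"
  shows "(\<Sum>a\<in>qubits n. f a) = (\<Sum>\<alpha>\<in>sub_basis s. \<Sum>\<beta>\<in>sub_basis (map Not s). f (mix s \<alpha> \<beta>))"
proof -
  let ?z = "replicate n False"
  have "(\<Sum>a\<in>qubits n. f a) = (\<Sum>(\<alpha>, \<beta>)\<in>sub_basis s \<times> sub_basis (map Not s). f (mix s \<alpha> \<beta>))"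
    by (rule sum.reindex_bij_witness[of _ "\<lambda>(\<alpha>, \<beta>). mix s \<alpha> \<beta>" "\<lambda>a. (mix s a ?z, mix s ?z a)"])
       (use assms in \<open>auto simp: qubits_def sub_basis_def split: if_splits intro!: nth_equalityI arg_cong[where f = f]\<close>)
  then show ?thesis
    by (simp add: sum.cartesian_product)
qed

lemma swap_overlap_eq_purity:
  assumes s: "s \<in> qubits n"
  shows "swap_overlap n psi s = of_real (purity psi s)"
proof -
  let ?A = "sub_basis s" and ?B = "sub_basis (map Not s)" and ?m = "mix s"
  have mix_mix: "?m (?m a' b') (?m a b) = ?m a' b" "?m (?m a b) (?m a' b') = ?m a b'"
    if "a \<in> ?A" "a' \<in> ?A" "b \<in> ?B" "b' \<in> ?B" for a a' b b'
    using that s by (auto simp: sub_basis_def qubits_def intro!: nth_equalityI)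
  have "swap_overlap n psi s
      = (\<Sum>x\<in>qubits n. \<Sum>y\<in>qubits n. psi x * psi y * cnj (psi (?m y x) * psi (?m x y)))"
    by (simp add: swap_overlap_def sum.cartesian_product psi_pair_def swap_pair_def case_prod_unfold)
  also have "\<dots> = (\<Sum>a\<in>?A. \<Sum>b\<in>?B. \<Sum>a'\<in>?A. \<Sum>b'\<in>?B.
      psi (?m a b) * psi (?m a' b') * cnj (psi (?m (?m a' b') (?m a b)) * psi (?m (?m a b) (?m a' b'))))"
    by (simp add: sum_qubits_split_subsystem[OF s])
  also have "\<dots> = (\<Sum>a\<in>?A. \<Sum>b\<in>?B. \<Sum>a'\<in>?A. \<Sum>b'\<in>?B.
      psi (?m a b) * psi (?m a' b') * cnj (psi (?m a' b) * psi (?m a b')))"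
    by (intro sum.cong refl) (simp add: mix_mix)
  also have "\<dots> = (\<Sum>a\<in>?A. \<Sum>a'\<in>?A. \<Sum>b\<in>?B. \<Sum>b'\<in>?B.
      psi (?m a b) * psi (?m a' b') * cnj (psi (?m a' b) * psi (?m a b')))"
    by (rule sum.cong[OF refl], rule sum.swap)
  also have "\<dots> = (\<Sum>a\<in>?A. \<Sum>a'\<in>?A. rho psi s a a' * rho psi s a' a)"
    by (simp add: rho_def sum_product algebra_simps)
  finally have "swap_overlap n psi s = (\<Sum>a\<in>?A. \<Sum>a'\<in>?A. rho psi s a a' * rho psi s a' a)" .
  then show ?thesis
    using swap_overlap_real[OF s, of psi] by (simp add: purity_def)
qed

lemma cmod_power2_eq_Re_mult_cnj: "(cmod z)\<^sup>2 = Re (z * cnj z)"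
  by (simp add: complex_mult_cnj cmod_power2)

lemma swap_test_final_eq:
  "swap_test_final psi s (x, r) = (psi_reg psi r + sgn_bit x * psi_reg psi (swap_t s r)) / 2"
proof -
  define c where "c = complex_of_real (sqrt 2)"
  have c2: "c * c = 2"
    by (simp add: c_def flip: of_real_mult)
  have "swap_test_final psi s (x, r) = (psi_reg psi r / c + sgn_bit x * (psi_reg psi (swap_t s r) / c)) / c"
    by (simp add: swap_test_final_def had_anc_def ctrl_swap_def swap_test_init_def sgn_bit_def flip: c_def)
  also have "\<dots> = (psi_reg psi r + sgn_bit x * psi_reg psi (swap_t s r)) / (c * c)"
    by (simp add: add_divide_distrib)
  finally show ?thesis
    by (simp only: c2)
qed

lemma swap_test_prob_eq:
  assumes norm: "(\<Sum>x\<in>qubits n. (cmod (psi x))\<^sup>2) = 1" and s: "s \<in> qubits n"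
  shows "swap_test_prob n t psi s x = (if x then (1 - purity psi s ^ t) / 2 else (1 + purity psi s ^ t) / 2)"
proof -
  let ?z = "replicate n False"
  let ?A = "\<lambda>r. psi_reg psi (swap_t ?z r)" and ?B = "\<lambda>r. psi_reg psi (swap_t s r)"
  let ?ov = "\<lambda>f g. \<Sum>r\<in>regs n t. f r * cnj (g r)"
  have ovs: "?ov ?A ?A = 1" "?ov ?B ?B = 1"
      "?ov ?A ?B = of_real (purity psi s ^ t)" "?ov ?B ?A = of_real (purity psi s ^ t)"
    using s by (simp_all add: sum_regs_swap_t_overlap swap_overlap_replicate_False[OF norm]
        swap_overlap_eq_purity)
  have "(?A r + sgn_bit x * ?B r) * cnj (?A r + sgn_bit x * ?B r)
      = ?A r * cnj (?A r) + ?B r * cnj (?B r) + sgn_bit x * (?A r * cnj (?B r) + ?B r * cnj (?A r))" for r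
    by (cases x) (simp_all add: sgn_bit_def algebra_simps)
  then have "(\<Sum>r\<in>regs n t. (?A r + sgn_bit x * ?B r) * cnj (?A r + sgn_bit x * ?B r))
      = ?ov ?A ?A + ?ov ?B ?B + sgn_bit x * (?ov ?A ?B + ?ov ?B ?A)"
    by (simp only: sum.distrib sum_distrib_left[symmetric])
  moreover have "swap_test_prob n t psi s x
      = Re (\<Sum>r\<in>regs n t. (?A r + sgn_bit x * ?B r) * cnj (?A r + sgn_bit x * ?B r)) / 4"
    unfolding swap_test_prob_def swap_test_final_eq cmod_power2_eq_Re_mult_cnj Re_sum sum_divide_distrib
    by (rule sum.cong) (simp_all add: swap_t_replicate_False)
  ultimately show ?thesis
    by (cases x) (simp_all add: ovs sgn_bit_def)
qed

lemma hidden_cut_final_eq: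
  "hidden_cut_final n psi (x, r) = (\<Sum>y\<in>qubits n. sgn_bit (dotb x y) * psi_reg psi (swap_t y r)) / 2 ^ n"
proof -
  define c where "c = complex_of_real (sqrt (2 ^ n))"
  have c2: "c * c = 2 ^ n"
    by (simp add: c_def flip: of_real_mult)
  have first_layer: "had_grp n (hidden_cut_init n psi) = (\<lambda>(g, r). psi_reg psi r / c)"
  proof (intro ext, clarify)
    fix g r
    have "(\<Sum>y\<in>qubits n. sgn_bit (dotb g y) * hidden_cut_init n psi (y, r))
        = (\<Sum>y\<in>qubits n. if y = replicate n False then psi_reg psi r else 0)"
      by (intro sum.cong refl) (simp add: hidden_cut_init_def sgn_bit_def)
    then show "had_grp n (hidden_cut_init n psi) (g, r) = psi_reg psi r / c"
      by (simp add: had_grp_def c_def)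
  qed
  have "hidden_cut_final n psi (x, r) = (\<Sum>y\<in>qubits n. sgn_bit (dotb x y) * (psi_reg psi (swap_t y r) / c)) / c"
    unfolding hidden_cut_final_def first_layer by (simp add: had_grp_def ctrl_swap_grp_def flip: c_def)
  also have "\<dots> = (\<Sum>y\<in>qubits n. sgn_bit (dotb x y) * psi_reg psi (swap_t y r)) / (c * c)"
    by (simp add: sum_divide_distrib[symmetric])
  finally show ?thesis
    by (simp only: c2)
qed

lemma p_t_eq_sum_swap_overlap:
  assumes x: "x \<in> qubits n"
  shows "p_t n t psi x = Re (\<Sum>z\<in>qubits n. sgn_bit (dotb x z) * swap_overlap n psi z ^ t) / 2 ^ n"
proof -
  let ?H = "\<lambda>r. \<Sum>y\<in>qubits n. sgn_bit (dotb x y) * psi_reg psi (swap_t y r)"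
  let ?S = "\<Sum>z\<in>qubits n. sgn_bit (dotb x z) * swap_overlap n psi z ^ t"
  have "p_t n t psi x = Re (\<Sum>r\<in>regs n t. ?H r * cnj (?H r)) / (2 ^ n * 2 ^ n)"
    using x by (simp add: p_t_def hidden_cut_final_eq cmod_power2_eq_Re_mult_cnj Re_sum
        sum_divide_distrib[symmetric] Re_divide_of_real)
  also have "(\<Sum>r\<in>regs n t. ?H r * cnj (?H r)) = (\<Sum>r\<in>regs n t. \<Sum>y\<in>qubits n. \<Sum>y'\<in>qubits n.
      sgn_bit (dotb x y) * sgn_bit (dotb x y') * (psi_reg psi (swap_t y r) * cnj (psi_reg psi (swap_t y' r))))"
    by (simp add: sum_product cnj_sum mult_ac)
  also have "\<dots> = (\<Sum>y\<in>qubits n. \<Sum>y'\<in>qubits n. sgn_bit (dotb x y) * sgn_bit (dotb x y') *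
      (\<Sum>r\<in>regs n t. psi_reg psi (swap_t y r) * cnj (psi_reg psi (swap_t y' r))))"
    by (simp add: sum_distrib_left sum.swap[of _ "regs n t"])
  also have "\<dots> = (\<Sum>y\<in>qubits n. \<Sum>y'\<in>qubits n. sgn_bit (dotb x (bxor y y')) * swap_overlap n psi (bxor y y') ^ t)"
    by (intro sum.cong refl) (simp add: sum_regs_swap_t_overlap dotb_bxor[OF x] sgn_bit_def)
  also have "\<dots> = (\<Sum>y\<in>qubits n. ?S)"
    by (rule sum.cong[OF refl], rule sum_qubits_bxor_reindex[where f = "\<lambda>z. sgn_bit (dotb x z) * swap_overlap n psi z ^ t"])
  also have "\<dots> = 2 ^ n * ?S"
    by (simp add: card_qubits)
  finally show ?thesis
    by simp
qed

lemma sum_p_t_coset: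
  assumes norm: "(\<Sum>x\<in>qubits n. (cmod (psi x))\<^sup>2) = 1" and s: "s \<in> qubits n"
  shows "(\<Sum>x\<in>{x\<in>qubits n. dotb x s = b}. p_t n t psi x)
    = (if b then (1 - purity psi s ^ t) / 2 else (1 + purity psi s ^ t) / 2)"
proof -
  let ?F = "{x\<in>qubits n. dotb x s = b}" and ?z = "replicate n False"
  let ?Y = "\<lambda>z. swap_overlap n psi z ^ t"
  have "(\<Sum>x\<in>?F. p_t n t psi x) = Re (\<Sum>z\<in>qubits n. (\<Sum>x\<in>?F. sgn_bit (dotb x z)) * ?Y z) / 2 ^ n"
    by (simp add: p_t_eq_sum_swap_overlap sum_divide_distrib[symmetric] Re_sum[symmetric]
        sum_distrib_right sum.swap[of _ ?F])
  also have "(\<Sum>z\<in>qubits n. (\<Sum>x\<in>?F. sgn_bit (dotb x z)) * ?Y z)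
      = (\<Sum>z\<in>qubits n. 2 ^ n / 2 * (if z = ?z then ?Y z else 0) + 2 ^ n / 2 * sgn_bit b * (if z = s then ?Y z else 0))"
    by (intro sum.cong refl) (simp add: sum_sgn_bit_dotb_coset[OF s] algebra_simps)
  also have "\<dots> = 2 ^ n / 2 * ?Y ?z + 2 ^ n / 2 * sgn_bit b * ?Y s"
    using s by (simp only: sum.distrib sum_distrib_left[symmetric] sum.delta finite_qubits
        replicate_False_in_qubits if_True)
  also have "\<dots> = 2 ^ n / 2 * (1 + sgn_bit b * of_real (purity psi s ^ t))"
    using s by (simp add: swap_overlap_replicate_False[OF norm] swap_overlap_eq_purity algebra_simps)
  finally show ?thesis
    by (cases b) (simp_all add: sgn_bit_def)
qed

lemma pmf_embed_pmf_finite_support: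
  assumes "finite A" "\<And>x. 0 \<le> f x" "\<And>x. x \<notin> A \<Longrightarrow> f x = 0" "sum f A = 1"
  shows "pmf (embed_pmf f) x = f x"
proof (rule pmf_embed_pmf)
  have "(\<integral>\<^sup>+x. ennreal (f x) \<partial>count_space UNIV) = (\<Sum>x\<in>A. ennreal (f x))"
    by (rule nn_integral_count_space') (use assms in auto)
  then show "(\<integral>\<^sup>+x. ennreal (f x) \<partial>count_space UNIV) = 1"
    using assms by (simp add: sum_ennreal)
qed (use assms in simp)

lemma sum_p_t:
  assumes norm: "(\<Sum>x\<in>qubits n. (cmod (psi x))\<^sup>2) = 1"
  shows "(\<Sum>x\<in>qubits n. p_t n t psi x) = 1"
proof -
  let ?z = "replicate n False"
  have "of_real (purity psi ?z) = (1 :: complex)"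
    using swap_overlap_eq_purity[of ?z n psi] swap_overlap_replicate_False[OF norm] by simp
  then have "purity psi ?z = 1"
    by (simp add: of_real_eq_1_iff)
  moreover have "{x\<in>qubits n. dotb x ?z = False} = qubits n"
    by simp
  ultimately show ?thesis
    using sum_p_t_coset[OF norm replicate_False_in_qubits, of t False] by simp
qed

lemma pmf_p_t_pmf:
  assumes norm: "(\<Sum>x\<in>qubits n. (cmod (psi x))\<^sup>2) = 1"
  shows "pmf (p_t_pmf n t psi) x = p_t n t psi x"
  unfolding p_t_pmf_def
  by (rule pmf_embed_pmf_finite_support[OF finite_qubits _ _ sum_p_t[OF norm]])
     (auto simp: p_t_def intro: sum_nonneg)

lemma pmf_swap_test_pmf:
  assumes norm: "(\<Sum>x\<in>qubits n. (cmod (psi x))\<^sup>2) = 1" and s: "s \<in> qubits n"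
  shows "pmf (swap_test_pmf n t psi s) b = swap_test_prob n t psi s b"
proof -
  have total: "sum (swap_test_prob n t psi s) UNIV = 1"
    by (simp add: swap_test_prob_eq[OF norm s] UNIV_bool field_simps)
  show ?thesis
    unfolding swap_test_pmf_def
    by (rule pmf_embed_pmf_finite_support[OF _ _ _ total]) (auto simp: swap_test_prob_def intro: sum_nonneg)
qed

lemma swap_test_pmf_eq_map_p_t_pmf:
  assumes norm: "(\<Sum>x\<in>qubits n. (cmod (psi x))\<^sup>2) = 1" and s: "s \<in> qubits n"
  shows "swap_test_pmf n t psi s = map_pmf (\<lambda>x. dotb x s) (p_t_pmf n t psi)"
proof (rule pmf_eqI)
  fix b
  let ?M = "measure_pmf (p_t_pmf n t psi)" and ?F = "{x\<in>qubits n. dotb x s = b}"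
  have "set_pmf (p_t_pmf n t psi) \<subseteq> qubits n"
    by (auto simp: set_pmf_eq pmf_p_t_pmf[OF norm] p_t_def)
  then have "(\<lambda>x. dotb x s) -` {b} \<inter> set_pmf (p_t_pmf n t psi) = ?F \<inter> set_pmf (p_t_pmf n t psi)"
    by auto
  then have "measure ?M ((\<lambda>x. dotb x s) -` {b}) = measure ?M ?F"
    by (metis measure_Int_set_pmf)
  also have "\<dots> = (\<Sum>x\<in>?F. p_t n t psi x)"
    by (simp add: measure_measure_pmf_finite pmf_p_t_pmf[OF norm])
  finally show "pmf (swap_test_pmf n t psi s) b = pmf (map_pmf (\<lambda>x. dotb x s) (p_t_pmf n t psi)) b"
    by (simp add: pmf_map pmf_swap_test_pmf[OF norm s] swap_test_prob_eq[OF norm s] sum_p_t_coset[OF norm s])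
qed

theorem mainTheorem9:
  fixes n t :: nat and psi :: "bool list \<Rightarrow> complex" and s :: "bool list"
  assumes norm: "(\<Sum>x \<in> qubits n. (cmod (psi x))\<^sup>2) = 1"
    and t: "t \<ge> 1"
    and s: "s \<in> qubits n"
  shows "(\<forall>x. swap_test_prob n t psi s x =
             (if x then (1 - purity psi s ^ t) / 2 else 1 - (1 - purity psi s ^ t) / 2))
    \<and> (\<forall>b. swap_test_prob n t psi s b = (\<Sum>x \<in> {x \<in> qubits n. dotb x s = b}. p_t n t psi x))
    \<and> (\<forall>m::nat. m \<ge> 1 \<longrightarrow>
          map_pmf (\<lambda>X. 1 - 2 / real m * (\<Sum>k \<in> {1..m}. of_bool (X k)))
                  (Pi_pmf {1..m} False (\<lambda>_. swap_test_pmf n t psi s))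
        = map_pmf (\<lambda>X. 1 - 2 / real m * (\<Sum>k \<in> {1..m}. of_bool (dotb (X k) s)))
                  (Pi_pmf {1..m} [] (\<lambda>_. p_t_pmf n t psi)))"
proof (intro conjI allI impI)
  fix x
  show "swap_test_prob n t psi s x = (if x then (1 - purity psi s ^ t) / 2 else 1 - (1 - purity psi s ^ t) / 2)"
    by (simp add: swap_test_prob_eq[OF norm s] field_simps)
next
  fix b
  show "swap_test_prob n t psi s b = (\<Sum>x \<in> {x \<in> qubits n. dotb x s = b}. p_t n t psi x)"
    by (simp add: swap_test_prob_eq[OF norm s] sum_p_t_coset[OF norm s])
next
  fix m :: nat
  have "Pi_pmf {1..m} False (\<lambda>_. swap_test_pmf n t psi s)
      = map_pmf (\<lambda>X. (\<lambda>x. dotb x s) \<circ> X) (Pi_pmf {1..m} [] (\<lambda>_. p_t_pmf n t psi))"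
    unfolding swap_test_pmf_eq_map_p_t_pmf[OF norm s] by (rule Pi_pmf_map) simp_all
  then show "map_pmf (\<lambda>X. 1 - 2 / real m * (\<Sum>k \<in> {1..m}. of_bool (X k)))
                  (Pi_pmf {1..m} False (\<lambda>_. swap_test_pmf n t psi s))
        = map_pmf (\<lambda>X. 1 - 2 / real m * (\<Sum>k \<in> {1..m}. of_bool (dotb (X k) s)))
                  (Pi_pmf {1..m} [] (\<lambda>_. p_t_pmf n t psi))"
    by (simp add: map_pmf_comp o_def)
qed

end
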